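(* Let $\mathcal{K}_{w,F}$ be an oriented folded ribbon knot. At a fold with fold angle $0<\theta<\pi$, there are two intersection points between the ribbon's boundary and the knot diagram, and both contribute the same sign to the ribbon linking number, namely: left underfold $+1$; left overfold $-1$; right underfold $-1$; right overfold $+1$.
   Context: For a polygonal knot diagram $\mathcal{K}$ and width $w>0$, the folded ribbon knot $\mathcal{K}_{w,F}$ is a flat strip of width $w$ centred on $\mathcal{K}$ (boundary parallel to and at distance $w/2$ from each edge), folded at each vertex along a fold line through the vertex perpendicular to the bisector of the angle between the adjacent edges; formally a piecewise-linear immersion of an annulus or Möbius band whose only singularities are pairwise disjoint fold lines, with consistent crossing information. The fold angle at a vertex is the angle in $[0,\pi]$ between the two adjacent edges. With $\mathcal{K}$ oriented, at vertex $v_i$ with incoming edge $e_{i-1}$ and outgoing edge $e_i$, the fold is a left (resp. right) fold if $e_i$ turns left (resp. right) of $e_{i-1}$; it is an underfold if the layer of ribbon along $e_i$ lies beneath the layer along $e_{i-1}$ in the fold, an overfold otherwise. The boundary of the ribbon is oriented parallel to $\mathcal{K}$, crossings between the knot diagram and the boundary are signed $\pm1$ by the right-hand rule, and the ribbon linking number is the linking number of the knot diagram with one boundary component of the ribbon (one half the sum of the crossing signs with that component). *)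

theory Defs
  imports "HOL-Analysis.Analysis"
begin

text \<open>Local model of a single fold of a folded ribbon knot.  The fold vertex is v, the incoming edge
  e_(i-1) has unit direction d1 (it arrives at v), the outgoing edge e_i has
  unit direction d2 (it leaves v).\<close>

definition cross :: "complex \<Rightarrow> complex \<Rightarrow> real" where
  "cross a b = Im (cnj a * b)"

text \<open>Fold angle: the angle in [0,pi] between the two edges at v, which emanate
  from v in the directions -d1 and d2.\<close>
definition fold_angle :: "complex \<Rightarrow> complex \<Rightarrow> real" where
  "fold_angle d1 d2 = arccos ((- d1) \<bullet> d2)"

text \<open>Left fold: e_i turns left of e_(i-1); right fold: it turns right.\<close>
definition left_fold :: "complex \<Rightarrow> complex \<Rightarrow> bool" where
  "left_fold d1 d2 \<longleftrightarrow> cross d1 d2 > 0"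

definition right_fold :: "complex \<Rightarrow> complex \<Rightarrow> bool" where
  "right_fold d1 d2 \<longleftrightarrow> cross d1 d2 < 0"

definition in_edge :: "complex \<Rightarrow> complex \<Rightarrow> complex set" where
  "in_edge v d1 = {v - complex_of_real t * d1 | t. t \<ge> 0}"

definition out_edge :: "complex \<Rightarrow> complex \<Rightarrow> complex set" where
  "out_edge v d2 = {v + complex_of_real t * d2 | t. t \<ge> 0}"

text \<open>Fold line: through v, perpendicular to the bisector (direction d2 - d1)
  of the angle between the edges.  Both ribbon layers lie on the closed side
  of the fold line containing the two edges.\<close>
definition fold_line :: "complex \<Rightarrow> complex \<Rightarrow> complex \<Rightarrow> complex set" where
  "fold_line v d1 d2 = {x. (x - v) \<bullet> (d2 - d1) = 0}"

definition ribbon_side :: "complex \<Rightarrow> complex \<Rightarrow> complex \<Rightarrow> complex set" where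
  "ribbon_side v d1 d2 = {x. (x - v) \<bullet> (d2 - d1) \<ge> 0}"

text \<open>Line parallel to direction d through v, at signed distance off to the
  left (off > 0) or right (off < 0).\<close>
definition parallel_line :: "complex \<Rightarrow> complex \<Rightarrow> real \<Rightarrow> complex set" where
  "parallel_line v d off = {v + complex_of_real s * d + complex_of_real off * \<i> * d | s. True}"

datatype layer = InLayer | OutLayer

text \<open>Pieces of the ribbon boundary near the fold: the two boundary lines of
  the strip along each edge, cut off at the fold line; each piece is oriented
  parallel to its edge and lies in that edge's layer.\<close>
definition fold_boundary_pieces ::
  "complex \<Rightarrow> complex \<Rightarrow> complex \<Rightarrow> real \<Rightarrow> (complex set \<times> complex \<times> layer) set" where
  "fold_boundary_pieces v d1 d2 w =
     {(parallel_line v d1 (w/2) \<inter> ribbon_side v d1 d2, d1, InLayer),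
      (parallel_line v d1 (-w/2) \<inter> ribbon_side v d1 d2, d1, InLayer),
      (parallel_line v d2 (w/2) \<inter> ribbon_side v d1 d2, d2, OutLayer),
      (parallel_line v d2 (-w/2) \<inter> ribbon_side v d1 d2, d2, OutLayer)}"

definition fold_knot_pieces ::
  "complex \<Rightarrow> complex \<Rightarrow> complex \<Rightarrow> (complex set \<times> complex \<times> layer) set" where
  "fold_knot_pieces v d1 d2 = {(in_edge v d1, d1, InLayer), (out_edge v d2, d2, OutLayer)}"

text \<open>Layer order: in an underfold the layer along e_i (OutLayer) lies beneath
  the layer along e_(i-1) (InLayer); in an overfold it lies above.\<close>
definition layer_above :: "bool \<Rightarrow> layer \<Rightarrow> layer \<Rightarrow> bool" where
  "layer_above underfold l1 l2 \<longleftrightarrow>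
     (underfold \<and> l1 = InLayer \<and> l2 = OutLayer) \<or>
     (\<not> underfold \<and> l1 = OutLayer \<and> l2 = InLayer)"

text \<open>Right-hand rule: a crossing is positive iff the under strand points to
  the left of the over strand.\<close>
definition crossing_sign :: "complex \<Rightarrow> complex \<Rightarrow> real" where
  "crossing_sign over_dir under_dir = sgn (cross over_dir under_dir)"

definition fold_intersections :: "complex \<Rightarrow> complex \<Rightarrow> complex \<Rightarrow> real \<Rightarrow> complex set" where
  "fold_intersections v d1 d2 w =
     {p. \<exists>B db lb K dk lk. (B, db, lb) \<in> fold_boundary_pieces v d1 d2 w \<and>
          (K, dk, lk) \<in> fold_knot_pieces v d1 d2 \<and> p \<in> B \<and> p \<in> K}"

definition fold_crossings ::
  "complex \<Rightarrow> complex \<Rightarrow> complex \<Rightarrow> real \<Rightarrow> bool \<Rightarrow> (complex \<times> real) set" where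
  "fold_crossings v d1 d2 w underfold =
     {(p, s). \<exists>B db lb K dk lk. (B, db, lb) \<in> fold_boundary_pieces v d1 d2 w \<and>
          (K, dk, lk) \<in> fold_knot_pieces v d1 d2 \<and> p \<in> B \<and> p \<in> K \<and>
          s = (if layer_above underfold lb lk then crossing_sign db dk
               else crossing_sign dk db)}"

end

theory Submission
  imports Defs
begin

(* Let k = cross d1 d2, the sine of the turning angle at v; a fold angle strictly between
   0 and pi forces k \<noteq> 0.  For a unit vector d, the ray point v + t d' lies on the line
   parallel to d at offset r iff r = t * cross d d'.  Hence the two boundary lines
   (offsets +-w/2) of the strip along an edge never meet that edge, and meet the other edge
   exactly once, at distance w / (2|k|) from v.  Both edges lie on the ribbon side of the
   fold line, so cutting at the fold loses nothing.  Each crossing therefore puts one layer's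
   boundary across the other layer's edge, and both such crossings have sign sgn k, negated
   when the layer order is reversed (overfold). *)

lemma cnj_mult_self_eq_1: "norm d = 1 \<Longrightarrow> cnj d * d = 1"
  by (metis complex_norm_square mult.commute of_real_1 power_one)

lemma cross_self [simp]: "cross d d = 0"
  by (simp add: cross_def)

lemma cross_minus_right [simp]: "cross a (- b) = - cross a b"
  by (simp add: cross_def)

lemma cross_commute: "cross b a = - cross a b"
  by (simp add: cross_def algebra_simps)

lemma inner_square_plus_cross_square: "(a \<bullet> b)\<^sup>2 + (cross a b)\<^sup>2 = (norm a * norm b)\<^sup>2"
proof -
  have "(a \<bullet> b)\<^sup>2 + (cross a b)\<^sup>2 = (cmod (cnj a * b))\<^sup>2"
    by (simp add: cross_def inner_complex_def cmod_power2)
  then show ?thesis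
    by (simp add: norm_mult)
qed

lemma cross_nonzero_if_proper_fold_angle:
  assumes "norm d1 = 1" "norm d2 = 1" "0 < fold_angle d1 d2" "fold_angle d1 d2 < pi"
  shows "cross d1 d2 \<noteq> 0"
proof
  assume "cross d1 d2 = 0"
  then have "(d1 \<bullet> d2)\<^sup>2 = 1"
    using inner_square_plus_cross_square[of d1 d2] assms(1,2) by simp
  then have "- (d1 \<bullet> d2) = 1 \<or> - (d1 \<bullet> d2) = -1"
    by (auto simp: power2_eq_1_iff)
  then show False
    using assms(3,4) by (auto simp: fold_angle_def)
qed

lemma unit_mult_eq_iff:
  assumes "norm d = 1"
  shows "x = y * d \<longleftrightarrow> cnj d * x = y"
  using cnj_mult_self_eq_1[OF assms] by (auto simp: ac_simps)

lemma in_edge_eq_out_edge_minus: "in_edge v d = out_edge v (- d)"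
  by (simp add: in_edge_def out_edge_def)

lemma out_edge_point_in_parallel_line_iff:
  assumes "norm d = 1"
  shows "v + of_real t * d' \<in> parallel_line v d r \<longleftrightarrow> r = t * cross d d'"
proof -
  have "v + of_real t * d' = v + of_real s * d + of_real r * \<i> * d \<longleftrightarrow>
      of_real t * (cnj d * d') = of_real s + of_real r * \<i>" for s
  proof -
    have "v + of_real t * d' = v + of_real s * d + of_real r * \<i> * d \<longleftrightarrow>
        of_real t * d' = (of_real s + of_real r * \<i>) * d"
      by (simp add: algebra_simps)
    also have "\<dots> \<longleftrightarrow> cnj d * (of_real t * d') = of_real s + of_real r * \<i>"
      using unit_mult_eq_iff[OF assms] .
    finally show ?thesis
      by (simp add: mult.left_commute)
  qed
  then show ?thesis
    by (auto simp: parallel_line_def cross_def complex_eq_iff)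
qed

lemma out_edge_inter_parallel_line:
  assumes "norm d = 1"
  shows "out_edge v d' \<inter> parallel_line v d r = {v + of_real t * d' | t. 0 \<le> t \<and> r = t * cross d d'}"
  using out_edge_point_in_parallel_line_iff[OF assms] by (auto simp: out_edge_def)

lemma offset_eq_pm_half_width_iff:
  fixes w k t :: real
  assumes "w > 0" "k \<noteq> 0"
  shows "0 \<le> t \<and> (w/2 = t * k \<or> - w/2 = t * k) \<longleftrightarrow> t = w / (2 * \<bar>k\<bar>)"
proof -
  have "w/2 = t * k \<or> - w/2 = t * k \<longleftrightarrow> \<bar>t * k\<bar> = w/2"
    using assms(1) by (simp add: abs_eq_iff') argo
  also have "\<dots> \<longleftrightarrow> \<bar>t\<bar> = w / (2 * \<bar>k\<bar>)"
    using assms(2) by (auto simp: abs_mult field_simps)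
  finally show ?thesis
    using assms by auto
qed

definition boundary_lines :: "complex \<Rightarrow> complex \<Rightarrow> real \<Rightarrow> complex set" where
  "boundary_lines v d w = parallel_line v d (w/2) \<union> parallel_line v d (- w/2)"

lemma out_edge_inter_boundary_lines:
  assumes "norm d = 1" "w > 0"
  shows "out_edge v d' \<inter> boundary_lines v d w =
    (if cross d d' = 0 then {} else {v + of_real (w / (2 * \<bar>cross d d'\<bar>)) * d'})"
proof -
  have "out_edge v d' \<inter> boundary_lines v d w =
      {v + of_real t * d' | t. 0 \<le> t \<and> (w/2 = t * cross d d' \<or> - w/2 = t * cross d d')}"
    unfolding boundary_lines_def Int_Un_distrib out_edge_inter_parallel_line[OF assms(1)] by blast
  then show ?thesis
    using offset_eq_pm_half_width_iff[OF assms(2)] assms(2) by auto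
qed

lemma out_edge_subset_halfplane:
  assumes "norm a = 1" "norm b = 1"
  shows "out_edge v a \<subseteq> {x. 0 \<le> (x - v) \<bullet> (a + b)}"
proof
  fix x assume "x \<in> out_edge v a"
  then obtain t where "0 \<le> t" "x = v + of_real t * a"
    by (auto simp: out_edge_def)
  moreover have "0 \<le> 1 + a \<bullet> b"
    using norm_cauchy_schwarz[of "- a" b] assms by simp
  ultimately have "0 \<le> t * (1 + a \<bullet> b)"
    by simp
  moreover have "x - v = t *\<^sub>R a"
    using \<open>x = v + of_real t * a\<close> by (simp add: scaleR_conv_of_real)
  ultimately show "x \<in> {x. 0 \<le> (x - v) \<bullet> (a + b)}"
    using assms(1) by (simp add: inner_add_right dot_square_norm distrib_left)
qed

lemma fold_edges_subset_ribbon_side: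
  assumes "norm d1 = 1" "norm d2 = 1"
  shows "in_edge v d1 \<union> out_edge v d2 \<subseteq> ribbon_side v d1 d2"
proof -
  have "ribbon_side v d1 d2 = {x. 0 \<le> (x - v) \<bullet> (- d1 + d2)}"
    "ribbon_side v d1 d2 = {x. 0 \<le> (x - v) \<bullet> (d2 + - d1)}"
    by (simp_all add: ribbon_side_def algebra_simps)
  then show ?thesis
    using out_edge_subset_halfplane[of "- d1" d2 v] out_edge_subset_halfplane[of d2 "- d1" v] assms
    by (simp add: in_edge_eq_out_edge_minus)
qed

lemma fold_intersections_eq_Int:
  "fold_intersections v d1 d2 w =
    (boundary_lines v d1 w \<union> boundary_lines v d2 w) \<inter> ribbon_side v d1 d2 \<inter> (in_edge v d1 \<union> out_edge v d2)"
  unfolding fold_intersections_def fold_boundary_pieces_def fold_knot_pieces_def boundary_lines_def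
  by blast

lemma fold_intersections_eq:
  assumes "w > 0" "norm d1 = 1" "norm d2 = 1" "cross d1 d2 \<noteq> 0"
  defines "T \<equiv> w / (2 * \<bar>cross d1 d2\<bar>)"
  shows "fold_intersections v d1 d2 w = {v + of_real T * d2, v - of_real T * d1}"
proof -
  have "fold_intersections v d1 d2 w =
      (boundary_lines v d1 w \<union> boundary_lines v d2 w) \<inter> (out_edge v (- d1) \<union> out_edge v d2)"
    using fold_edges_subset_ribbon_side[OF assms(2,3), of v]
    by (auto simp: fold_intersections_eq_Int in_edge_eq_out_edge_minus)
  also have "\<dots> = (out_edge v (- d1) \<inter> boundary_lines v d1 w) \<union> (out_edge v d2 \<inter> boundary_lines v d1 w) \<union>
      (out_edge v (- d1) \<inter> boundary_lines v d2 w) \<union> (out_edge v d2 \<inter> boundary_lines v d2 w)"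
    by blast
  also have "\<dots> = {v + of_real T * d2} \<union> {v + of_real T * (- d1)}"
    using assms by (simp add: out_edge_inter_boundary_lines cross_commute[of d2 d1])
  finally show ?thesis
    by auto
qed

lemma fold_crossing_sign:
  assumes "w > 0" "norm d1 = 1" "norm d2 = 1" "(p, s) \<in> fold_crossings v d1 d2 w underfold"
  shows "s = (if underfold then sgn (cross d1 d2) else - sgn (cross d1 d2))"
proof -
  have "out_edge v (- d1) \<inter> boundary_lines v d1 w = {}" "out_edge v d2 \<inter> boundary_lines v d2 w = {}"
    using assms(1-3) by (simp_all add: out_edge_inter_boundary_lines)
  with assms(4) show ?thesis
    unfolding fold_crossings_def fold_boundary_pieces_def fold_knot_pieces_def boundary_lines_def
    by (auto simp: in_edge_eq_out_edge_minus crossing_sign_def layer_above_def cross_commute[of d2 d1] sgn_minus)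
qed

lemma card_fold_intersections:
  assumes "w > 0" "norm d1 = 1" "norm d2 = 1" "cross d1 d2 \<noteq> 0"
  shows "card (fold_intersections v d1 d2 w) = 2"
proof -
  define T where "T = w / (2 * \<bar>cross d1 d2\<bar>)"
  have "T \<noteq> 0"
    using assms(1,4) by (simp add: T_def)
  moreover have "d2 \<noteq> - d1"
    using assms(4) by auto
  ultimately have "v + of_real T * d2 \<noteq> v - of_real T * d1"
    by (metis add_left_cancel diff_conv_add_uminus mult_cancel_left mult_minus_right of_real_eq_0_iff)
  then show ?thesis
    using fold_intersections_eq[OF assms] by (simp add: T_def)
qed

theorem lemma4p1:
  fixes v d1 d2 :: complex and w :: real and underfold :: bool
  assumes "w > 0" and "norm d1 = 1" and "norm d2 = 1"
    and "0 < fold_angle d1 d2" and "fold_angle d1 d2 < pi"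
  shows "card (fold_intersections v d1 d2 w) = 2 \<and>
    (\<forall>(p, s) \<in> fold_crossings v d1 d2 w underfold.
        (left_fold d1 d2 \<and> underfold \<longrightarrow> s = 1) \<and>
        (left_fold d1 d2 \<and> \<not> underfold \<longrightarrow> s = -1) \<and>
        (right_fold d1 d2 \<and> underfold \<longrightarrow> s = -1) \<and>
        (right_fold d1 d2 \<and> \<not> underfold \<longrightarrow> s = 1))"
proof -
  have transversal: "cross d1 d2 \<noteq> 0"
    using cross_nonzero_if_proper_fold_angle assms(2-5) .
  have "card (fold_intersections v d1 d2 w) = 2"
    using card_fold_intersections[OF assms(1-3) transversal] .
  moreover have "\<forall>(p, s) \<in> fold_crossings v d1 d2 w underfold.
      s = (if underfold then sgn (cross d1 d2) else - sgn (cross d1 d2))"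
    using fold_crossing_sign[OF assms(1-3)] by blast
  ultimately show ?thesis
    by (auto simp: left_fold_def right_fold_def)
qed

end
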